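(* Consider the hard instance $G_{k,m}$ described in the context, and run Water-Filling on it. There is $k_0$ such that for all $k\ge k_0$ and all $m$, the resulting passive water-levels satisfy $p_{u_{t,i}}<1$ for all $t\in[m]$, $i\in[k]$, and $p_{v_{t,i}}<1$ for all $t\in[m-1]$, $i\in[k]$.
   Context: Fully online fractional matching model: an undirected graph is revealed online; each step is the arrival or the deadline of a vertex; at arrival, edges to previously arrived vertices are revealed; every neighbor of $v$ arrives before $v$'s deadline. The algorithm maintains $x_{uv}\ge 0$ with water-level $x_w:=\sum_{z}x_{wz}\le1$; $x_{uv}$ (with $u$ having the earlier deadline) may only be increased at $u$'s deadline. Water-Filling: at the deadline of $u$, with $N(u)$ the neighbors of $u$ whose deadlines have not been reached, while $x_u<1$ and $\min_{v\in N(u)}x_v<1$, continuously increase $x_{uv}$ at equal rates for all $v\in\arg\min_{v\in N(u)}x_v$. The passive water-level $p_w$ of a vertex $w$ is its water-level $x_w$ immediately before $w$'s deadline. Let $c=2-\sqrt2$, $f(x)=\tfrac12(\ln(1-x)+\ln(1-c+x))+\frac{1}{\sqrt2(x-1)}+\frac{2+\sqrt2-\ln(1-c)}{2}$ on $[0,c]$ (a strictly decreasing bijection onto $[0,1]$), and $h(x)=f(c-f^{-1}(x))$ for $x\in[0,1]$. Hard instance $G_{k,m}$: vertex set $\bigcup_{t\in[m]}(U_t\cup V_t)$ with $U_t=\{u_{t,1},\dots,u_{t,k}\}$, $V_t=\{v_{t,1},\dots,v_{t,k}\}$. Edges: $(u_{t,i},v_{t,j})$ for all $t\in[m]$, $i\in[k]$,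 $j\ge i$; and $(u_{t,i},u_{t+1,j})$ for all $t\in[m-1]$, $i\in[k]$, $1\le j\le\lfloor k\,h(\tfrac{i-1}{k})\rfloor$. All vertices arrive before any deadline. The deadlines of the $u$-vertices come first, in lexicographic order of $(t,i)$; afterwards the deadlines of all $v$-vertices are reached (in any order). *)

theory Defs
  imports Complex_Main
begin

text \<open>A state is the vector of water-levels x_w.  At the deadline of u, with
N the set of neighbours of u whose deadline has not been reached, the continuous
Water-Filling process raises the levels of the lowest neighbours at equal rates
until either x_u reaches 1 or all neighbours reach 1.  Its outcome is described
by a threshold level L: neighbour v ends at max (x v) L, i.e. receives the
increment max 0 (L - x v).\<close>

definition wf_incr :: "('a \<Rightarrow> real) \<Rightarrow> 'a set \<Rightarrow> real \<Rightarrow> 'a \<Rightarrow> real" where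
  "wf_incr x N a v =
     (if a \<le> 0 then 0
      else if (\<Sum>w\<in>N. 1 - x w) \<le> a then 1 - x v
      else max 0 ((THE L. (\<Sum>w\<in>N. max 0 (L - x w)) = a) - x v))"

definition wf_step :: "('a \<Rightarrow> real) \<Rightarrow> 'a \<Rightarrow> 'a set \<Rightarrow> ('a \<Rightarrow> real)" where
  "wf_step x u N =
     (let d = wf_incr x N (1 - x u) in
      (\<lambda>w. if w \<in> N then x w + d w
           else if w = u then x u + (\<Sum>v\<in>N. d v) else x w))"

text \<open>Passive water-level of w: processing the deadline sequence in order,
the level of w immediately before its own deadline.  Vertices still in the list
are exactly those whose deadline has not been reached.\<close>
fun wf_pass :: "('a \<Rightarrow> 'a \<Rightarrow> bool) \<Rightarrow> 'a list \<Rightarrow> ('a \<Rightarrow> real) \<Rightarrow> 'a \<Rightarrow> real" where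
  "wf_pass adj [] x w = x w"
| "wf_pass adj (u # rest) x w =
     (if w = u then x u
      else wf_pass adj rest (wf_step x u {v \<in> set rest. adj u v}) w)"

definition cc :: real where "cc = 2 - sqrt 2"

definition ff :: "real \<Rightarrow> real" where
  "ff x = (ln (1 - x) + ln (1 - cc + x)) / 2 + 1 / (sqrt 2 * (x - 1))
          + (2 + sqrt 2 - ln (1 - cc)) / 2"

definition ff_inv :: "real \<Rightarrow> real" where
  "ff_inv y = (THE x. x \<in> {0..cc} \<and> ff x = y)"

definition hh :: "real \<Rightarrow> real" where
  "hh x = ff (cc - ff_inv x)"

datatype hvtx = U nat nat | V nat nat

fun hard_edge :: "nat \<Rightarrow> nat \<Rightarrow> hvtx \<Rightarrow> hvtx \<Rightarrow> bool" where
  "hard_edge k m (U t i) (V t' j) =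
     (t' = t \<and> 1 \<le> t \<and> t \<le> m \<and> 1 \<le> i \<and> i \<le> k \<and> i \<le> j \<and> j \<le> k)"
| "hard_edge k m (U t i) (U t' j) =
     (t' = t + 1 \<and> 1 \<le> t \<and> t + 1 \<le> m \<and> 1 \<le> i \<and> i \<le> k \<and> 1 \<le> j \<and>
      real j \<le> of_int \<lfloor>real k * hh ((real i - 1) / real k)\<rfloor>)"
| "hard_edge k m _ _ = False"

definition hard_adj :: "nat \<Rightarrow> nat \<Rightarrow> hvtx \<Rightarrow> hvtx \<Rightarrow> bool" where
  "hard_adj k m a b = (hard_edge k m a b \<or> hard_edge k m b a)"

definition hard_uorder :: "nat \<Rightarrow> nat \<Rightarrow> hvtx list" where
  "hard_uorder k m = concat (map (\<lambda>t. map (\<lambda>i. U t i) [1..<k+1]) [1..<m+1])"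

definition hard_vset :: "nat \<Rightarrow> nat \<Rightarrow> hvtx set" where
  "hard_vset k m = {V t i | t i. 1 \<le> t \<and> t \<le> m \<and> 1 \<le> i \<and> i \<le> k}"

definition hard_pass :: "nat \<Rightarrow> nat \<Rightarrow> hvtx list \<Rightarrow> hvtx \<Rightarrow> real" where
  "hard_pass k m vs w = wf_pass (hard_adj k m) (hard_uorder k m @ vs) (\<lambda>_. 0) w"

end

theory Submission
  imports Defs
begin

text \<open>Let \<open>J i = \<lfloor>k h ((i - 1) / k)\<rfloor>\<close> and \<open>S i = (\<Sum>i' < i. 1 / (k - i' + 1 + J i'))\<close>.
  Before the deadline of \<open>u\<^sub>t\<^sub>,\<^sub>i\<close> all of \<open>V\<^sub>t\<close> and \<open>U\<^sub>t\<^sub>+\<^sub>1\<close> is below \<open>S i\<close>; the vertex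
  \<open>u\<^sub>t\<^sub>,\<^sub>i\<close> has at least \<open>k - i + 1 + J i\<close> active neighbours there, and Water-Filling spreads its
  unit of water so that none of them rises above \<open>S i\<close> plus an equal share, i.e. above \<open>S (i + 1)\<close>.
  Hence every passive level in question is at most \<open>S (k + 1)\<close>.  With \<open>y\<^sub>i = f\<^sup>-\<^sup>1 ((i - 1) / k)\<close>,
  the identity \<open>1 - f y + f (c - y) = - (1 - y) f' y\<close> bounds the \<open>i\<close>-th term of \<open>S (k + 1)\<close> by
  \<open>(1 + O(1/\<surd>k)) (ln (1 - y\<^sub>i\<^sub>+\<^sub>1) - ln (1 - y\<^sub>i))\<close>, so the sum telescopes to about
  \<open>- ln (1 - c) = ln (1 + \<surd>2) < 0.89\<close>; for \<open>k \<ge> 1323\<close> the slack factor is at most \<open>21/20\<close>,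
  giving \<open>S (k + 1) \<le> 0.97\<close>.\<close>

lemma sqrt2_bounds: "1.414 < sqrt (2::real)" "sqrt (2::real) < 1.415"
proof -
  show "1.414 < sqrt (2::real)" by (rule real_less_rsqrt) (simp add: power2_eq_square)
  have "sqrt (2::real) < sqrt (1.415^2)" by (rule real_sqrt_less_mono) (simp add: power2_eq_square)
  then show "sqrt (2::real) < 1.415" by simp
qed

lemma cc_bounds: "0.585 < cc" "cc < 0.586"
  unfolding cc_def using sqrt2_bounds by auto

definition ff_slope :: "real \<Rightarrow> real" where
  "ff_slope y = 1 + (1 / sqrt 2) * (1 / (1 - y) - 1 / (1 - cc + y))"

text \<open>The algebraic identities about \<open>f\<close> are proved for an abstract \<open>s\<close> with \<open>s * s = 2\<close>
  (standing for \<open>\<surd>2\<close>), writing \<open>a = 1 - y\<close> and \<open>b = 1 - c + y\<close>, so that \<open>a + b = s\<close>;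
  the simplifier handles these far better than terms in \<open>sqrt 2\<close>.\<close>

lemma has_real_derivative_ff:
  assumes "cc - 1 < y" "y < 1"
  shows "(ff has_real_derivative - ff_slope y / (1 - y)) (at y)"
proof -
  have pos: "1 - y > 0" "1 - cc + y > 0" using assms by auto
  have identity: "(- 1 / a + 1 / b) / 2 - 1 / (s * a^2) = - (1 + (1 / s) * (1 / a - 1 / b)) / a"
    if "s * s = 2" "a \<noteq> 0" "b \<noteq> 0" "s \<noteq> 0" "b = s - a" for a b s :: real
  proof -
    have ss: "s * (s * z) = 2 * z" for z using that(1) by (metis mult.assoc)
    from that show ?thesis
      by (simp add: field_simps power2_eq_square) (simp add: that(5) algebra_simps ss)
  qed
  have d1: "((\<lambda>x. ln (1 - x)) has_real_derivative - 1 / (1 - y)) (at y)"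
    using pos by (auto intro!: derivative_eq_intros simp: field_simps)
  have d2: "((\<lambda>x. ln (1 - cc + x)) has_real_derivative 1 / (1 - cc + y)) (at y)"
    using pos by (auto intro!: derivative_eq_intros simp: field_simps)
  have "((\<lambda>x. 1 / (x - 1)) has_real_derivative - 1 / (1 - y)^2) (at y)"
    using pos by (auto intro!: derivative_eq_intros simp: field_simps power2_eq_square)
  from DERIV_cmult[OF this, of "1 / sqrt 2"]
  have d3: "((\<lambda>x. 1 / (sqrt 2 * (x - 1))) has_real_derivative - 1 / (sqrt 2 * (1 - y)^2)) (at y)"
    by (simp add: mult.commute)
  have "(ff has_real_derivative (- 1 / (1 - y) + 1 / (1 - cc + y)) / 2 - 1 / (sqrt 2 * (1 - y)^2)) (at y)"
    unfolding ff_def[abs_def]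
    using DERIV_add[OF DERIV_add[OF DERIV_cdivide[OF DERIV_add[OF d1 d2], of 2] d3]
        DERIV_const[of "(2 + sqrt 2 - ln (1 - cc)) / 2"]]
    by simp
  moreover have "(- 1 / (1 - y) + 1 / (1 - cc + y)) / 2 - 1 / (sqrt 2 * (1 - y)^2) = - ff_slope y / (1 - y)"
    unfolding ff_slope_def by (rule identity) (use pos in \<open>auto simp: cc_def\<close>)
  ultimately show ?thesis by simp
qed

lemma continuous_on_ff: "continuous_on {0..cc} ff"
proof (rule DERIV_atLeastAtMost_imp_continuous_on)
  fix y :: real assume "0 \<le> y" "y \<le> cc"
  then have "cc - 1 < y" "y < 1" using cc_bounds by auto
  then show "\<exists>D. (ff has_real_derivative D) (at y)" using has_real_derivative_ff by blast
qed

lemma ff_slope_mono: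
  assumes "0 \<le> y1" "y1 \<le> y2" "y2 \<le> cc"
  shows "ff_slope y1 \<le> ff_slope y2"
proof -
  have "1 / (1 - y1) \<le> 1 / (1 - y2)" using assms cc_bounds by (intro divide_left_mono) auto
  moreover have "1 / (1 - cc + y2) \<le> 1 / (1 - cc + y1)" using assms cc_bounds by (intro divide_left_mono) auto
  ultimately show ?thesis unfolding ff_slope_def by (intro add_left_mono mult_left_mono) auto
qed

lemma ff_slope_ge:
  assumes "0 \<le> y" "y \<le> cc"
  shows "y \<le> ff_slope y"
proof -
  have pos: "1 - y > 0" "1 - cc + y > 0" "sqrt 2 > 1.414" using assms cc_bounds sqrt2_bounds by auto
  have identity: "1 + (1 / s) * (1 / a - 1 / b) - y = y * ((3 * s - 2) * (1 - y) + s * y^2) / (s * a * b)"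
    if "s * s = 2" "a \<noteq> 0" "b \<noteq> 0" "s \<noteq> 0" "a = 1 - y" "b = s - 1 + y" for a b s :: real
  proof -
    have ss: "s * (s * z) = 2 * z" for z using that(1) by (metis mult.assoc)
    from that show ?thesis
      by (simp add: field_simps power2_eq_square) (simp add: that(5,6) algebra_simps ss)
  qed
  have "ff_slope y - y = y * ((3 * sqrt 2 - 2) * (1 - y) + sqrt 2 * y^2) / (sqrt 2 * (1 - y) * (1 - cc + y))"
    unfolding ff_slope_def by (rule identity) (use pos in \<open>auto simp: cc_def\<close>)
  moreover have "y * ((3 * sqrt 2 - 2) * (1 - y) + sqrt 2 * y^2) / (sqrt 2 * (1 - y) * (1 - cc + y)) \<ge> 0"
    using pos assms by (intro divide_nonneg_pos mult_nonneg_nonneg add_nonneg_nonneg) auto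
  ultimately show ?thesis by simp
qed

lemma ff_strict_antimono:
  assumes "0 \<le> a" "a < b" "b \<le> cc"
  shows "ff b < ff a"
proof (rule DERIV_neg_imp_decreasing_open[OF assms(2)])
  fix y assume y: "a < y" "y < b"
  then have "0 < y" "y < 1" "cc - 1 < y" using assms cc_bounds by auto
  moreover have "ff_slope y > 0" using ff_slope_ge[of y] y assms by auto
  ultimately show "\<exists>D. (ff has_real_derivative D) (at y) \<and> D < 0"
    using has_real_derivative_ff by (intro exI[of _ "- ff_slope y / (1 - y)"]) auto
next
  show "continuous_on {a..b} ff" by (rule continuous_on_subset[OF continuous_on_ff]) (use assms in auto)
qed

lemma ff_0: "ff 0 = 1"
proof -
  have "sqrt 2 / 2 = 1 / sqrt (2::real)" by (simp add: field_simps)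
  then show ?thesis by (simp add: ff_def field_simps)
qed

lemma ff_cc: "ff cc = 0"
proof -
  have "sqrt 2 * (cc - 1) = sqrt 2 - 2" by (simp add: cc_def algebra_simps)
  moreover have "- (2 + sqrt 2) / 2 * (sqrt 2 - 2) = (1::real)" by (simp add: algebra_simps)
  moreover have "sqrt 2 - 2 \<noteq> (0::real)" using sqrt2_bounds by auto
  ultimately have "1 / (sqrt 2 * (cc - 1)) = - (2 + sqrt 2) / 2" by (simp add: divide_eq_eq)
  then show ?thesis unfolding ff_def by (simp add: field_simps del: divide_const_simps)
qed

lemma ff_range:
  assumes "0 \<le> y" "y \<le> cc"
  shows "0 \<le> ff y" "ff y \<le> 1"
proof -
  show "0 \<le> ff y" using ff_strict_antimono[of y cc] assms ff_cc by (cases "y = cc") auto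
  show "ff y \<le> 1" using ff_strict_antimono[of 0 y] assms ff_0 by (cases "y = 0") auto
qed

lemma inj_on_ff: "inj_on ff {0..cc}"
proof (rule inj_onI)
  fix y1 y2 assume "y1 \<in> {0..cc}" "y2 \<in> {0..cc}" "ff y1 = ff y2"
  then show "y1 = y2"
    using ff_strict_antimono[of y1 y2] ff_strict_antimono[of y2 y1]
    by (cases y1 y2 rule: linorder_cases) auto
qed

lemma ff_inv:
  assumes "0 \<le> x" "x \<le> 1"
  shows "0 \<le> ff_inv x" "ff_inv x \<le> cc" "ff (ff_inv x) = x"
proof -
  obtain y where y: "0 \<le> y" "y \<le> cc" "ff y = x"
    using IVT2'[of ff cc x 0] continuous_on_ff ff_0 ff_cc assms cc_bounds by auto
  have "\<exists>!y. y \<in> {0..cc} \<and> ff y = x"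
    using y inj_on_ff by (intro ex1I[of _ y]) (auto dest: inj_onD)
  then have "ff_inv x \<in> {0..cc} \<and> ff (ff_inv x) = x"
    unfolding ff_inv_def by (rule theI')
  then show "0 \<le> ff_inv x" "ff_inv x \<le> cc" "ff (ff_inv x) = x" by auto
qed

lemma ff_inv_ff:
  assumes "0 \<le> y" "y \<le> cc"
  shows "ff_inv (ff y) = y"
  using ff_inv[of "ff y"] ff_range[OF assms] inj_on_ff assms by (auto dest: inj_onD)

lemma hh_range:
  assumes "0 \<le> x" "x \<le> 1"
  shows "0 \<le> hh x" "hh x \<le> 1"
  using ff_inv[OF assms] ff_range[of "cc - ff_inv x"] unfolding hh_def by auto

lemma ff_slope_eq:
  assumes "0 \<le> y" "y \<le> cc"
  shows "ff_slope y = 1 - ff y + ff (cc - y)"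
proof -
  have pos: "1 - y > 0" "1 - cc + y > 0" using assms cc_bounds by auto
  have "1 / (sqrt 2 * (y - 1)) = - (1 / sqrt 2) * (1 / (1 - y))"
    using pos by (simp add: field_simps)
  moreover have "1 / (sqrt 2 * (cc - y - 1)) = - (1 / sqrt 2) * (1 / (1 - cc + y))"
  proof -
    have "cc - y - 1 = - (1 - cc + y)" by simp
    moreover have "1 / (sqrt 2 * (- z)) = - (1 / sqrt 2) * (1 / z)" for z :: real by simp
    ultimately show ?thesis by (simp only:)
  qed
  ultimately show ?thesis unfolding ff_def ff_slope_def by (simp add: algebra_simps)
qed

lemma one_minus_ff_le:
  assumes "0 \<le> y" "y \<le> cc"
  shows "1 - ff y \<le> 3 * y^2"
proof -
  define s :: real where "s = sqrt 2"
  define a where "a = 1 - y"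
  define b where "b = s - 1 + y"
  have s: "1.414 < s" "s < 1.415" "s * s = 2" using sqrt2_bounds s_def by auto
  have cc_s: "cc = 2 - s" using s_def cc_def by simp
  have pos: "a > 0" "b > 0" using assms cc_bounds s cc_s a_def b_def by auto
  have ab: "s - 1 \<le> a * b"
  proof -
    have "a * b - (s - 1) = y * (cc - y)" unfolding a_def b_def cc_s by (simp add: algebra_simps)
    moreover have "0 \<le> y * (cc - y)" using assms by simp
    ultimately show ?thesis by linarith
  qed
  define R where "R = a * b / (s - 1)"
  have R: "R > 0" using pos s R_def by simp
  have "1 - ff y = - ln R / 2 + 1 / (s * a) - s / 2"
  proof -
    have "ln (1 - y) + ln (1 - cc + y) - ln (1 - cc) = ln R"
      unfolding R_def using pos s by (simp add: ln_mult ln_div a_def b_def cc_s)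
    then show ?thesis unfolding ff_def a_def s_def using pos(1) a_def by (simp add: field_simps)
  qed
  also have "\<dots> \<le> - (1 - (s - 1) / (a * b)) / 2 + 1 / (s * a) - s / 2"
  proof -
    have "ln (1 / R) \<le> 1 / R - 1" using R by (intro ln_le_minus_one) simp
    then have "1 - (s - 1) / (a * b) \<le> ln R" using R pos s by (simp add: ln_div R_def)
    then show ?thesis by simp
  qed
  also have "\<dots> = y^2 * (s + 1) / (2 * a * b)"
  proof -
    have ss: "s * (s * z) = 2 * z" for z using s(3) by (metis mult.assoc)
    from pos s show ?thesis
      by (simp add: field_simps power2_eq_square) (simp add: a_def b_def algebra_simps ss)
  qed
  also have "\<dots> \<le> y^2 * ((s + 1) / (2 * (s - 1)))"
    using ab pos s by (simp add: divide_left_mono)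
  also have "\<dots> \<le> y^2 * 3"
    using s by (intro mult_left_mono) (auto simp: divide_le_eq)
  finally show ?thesis by simp
qed

lemma ff_diff_le_ln_diff:
  assumes "0 \<le> z" "z \<le> y" "y \<le> cc"
  shows "ff z - ff y \<le> ff_slope y * (ln (1 - z) - ln (1 - y))"
proof -
  define \<psi> where "\<psi> t = ff t - ff_slope y * ln (1 - t)" for t
  have "\<psi> z \<le> \<psi> y"
  proof (rule DERIV_nonneg_imp_nondecreasing[OF assms(2)])
    fix t assume t: "z \<le> t" "t \<le> y"
    have t1: "cc - 1 < t" "t < 1" using t assms cc_bounds by auto
    have "((\<lambda>t. ln (1 - t)) has_real_derivative - 1 / (1 - t)) (at t)"
      using t1 by (auto intro!: derivative_eq_intros simp: field_simps)
    then have "(\<psi> has_real_derivative (- ff_slope t / (1 - t) - ff_slope y * (- 1 / (1 - t)))) (at t)"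
      unfolding \<psi>_def[abs_def] by (intro DERIV_diff DERIV_cmult has_real_derivative_ff t1)
    moreover have "- ff_slope t / (1 - t) - ff_slope y * (- 1 / (1 - t)) = (ff_slope y - ff_slope t) / (1 - t)"
      by (simp add: diff_divide_distrib)
    moreover have "ff_slope t \<le> ff_slope y" using ff_slope_mono t assms by auto
    ultimately show "\<exists>D. (\<psi> has_real_derivative D) (at t) \<and> 0 \<le> D" using t1 by auto
  qed
  then show ?thesis unfolding \<psi>_def by (simp add: algebra_simps)
qed

lemma minus_ln_one_minus_cc_le: "- ln (1 - cc) \<le> 0.92"
proof -
  have e: "1 + 0.46 + 0.46^2 / 2 \<le> exp (0.46::real)" by (rule exp_lower_Taylor_quadratic) simp
  have "(2.45::real) \<le> (1 + 0.46 + 0.46^2 / 2) * (1 + 0.46 + 0.46^2 / 2)"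
    by (simp add: power2_eq_square)
  also have "\<dots> \<le> exp 0.46 * exp 0.46" using e by (intro mult_mono) auto
  also have "\<dots> = exp 0.92" by (simp flip: exp_add)
  finally have exp_092: "2.45 \<le> exp (0.92::real)" .
  have "1 / (1 - cc) = sqrt 2 + 1"
  proof -
    have "(sqrt 2 - 1) * (sqrt 2 + 1) = (1::real)" by (simp add: algebra_simps)
    moreover have "sqrt 2 - 1 \<noteq> (0::real)" using sqrt2_bounds by auto
    ultimately show ?thesis by (simp add: cc_def field_simps)
  qed
  then have "- ln (1 - cc) = ln (sqrt 2 + 1)"
    using cc_bounds by (simp add: ln_div[symmetric] ln_inverse[symmetric] flip: inverse_eq_divide)
  also have "\<dots> \<le> ln (exp 0.92)" using exp_092 sqrt2_bounds by (subst ln_le_cancel_iff) auto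
  finally show ?thesis by simp
qed

lemma ff_slope_ge_21:
  assumes k: "1323 \<le> k" and y: "0 \<le> y" "y \<le> cc" and gap: "1 / real k \<le> 1 - ff y"
  shows "21 \<le> real k * ff_slope y"
proof -
  have "real k / 3 = real k^2 * (1 / real k) / 3" using k by (simp add: power2_eq_square)
  also have "\<dots> \<le> real k^2 * (3 * y^2) / 3"
    using gap one_minus_ff_le[OF y] by (intro divide_right_mono mult_left_mono) auto
  finally have "21^2 \<le> (real k * y)^2" using k by (simp add: power_mult_distrib)
  then have "21 \<le> real k * y" by (rule power2_le_imp_le) (use y in simp)
  also have "\<dots> \<le> real k * ff_slope y" using ff_slope_ge[OF y] by (simp add: mult_left_mono)
  finally show ?thesis .
qed

text \<open>With \<open>y = f\<^sup>-\<^sup>1 ((i - 1) / k)\<close> and \<open>y' = f\<^sup>-\<^sup>1 (i / k)\<close>: the denominator is at least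
  \<open>k * ff_slope y - 1 = k (1 - f y + f (c - y)) - 1\<close>, and \<open>1 / k = f y' - f y\<close>.\<close>

lemma inverse_le_ln_increment:
  assumes k: "1323 \<le> k" and i: "1 \<le> i" "i \<le> k"
    and J: "real k * hh ((real i - 1) / real k) - 1 \<le> real J"
  shows "1 / real (k - i + 1 + J)
    \<le> 21 / 20 * (ln (1 - ff_inv (real i / real k)) - ln (1 - ff_inv ((real i - 1) / real k)))"
proof -
  define y where "y = ff_inv ((real i - 1) / real k)"
  define y' where "y' = ff_inv (real i / real k)"
  have k0: "real k > 0" using k by simp
  have y: "0 \<le> y" "y \<le> cc" "ff y = (real i - 1) / real k"
    unfolding y_def using ff_inv i k0 by (auto simp: divide_le_eq)
  have y': "0 \<le> y'" "y' \<le> cc" "ff y' = real i / real k"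
    unfolding y'_def using ff_inv i k0 by (auto simp: divide_le_eq)
  have "y' \<le> y"
  proof (rule ccontr)
    assume "\<not> y' \<le> y"
    then have "ff y' < ff y" by (intro ff_strict_antimono) (use y y' in auto)
    moreover have "(real i - 1) / real k < real i / real k" using k0 by (simp add: divide_strict_right_mono)
    ultimately show False using y y' by simp
  qed
  have step: "1 / real k = ff y' - ff y" using y y' k0 by (simp add: field_simps)
  define W where "W = ff_slope y"
  have W: "W = 1 - (real i - 1) / real k + hh ((real i - 1) / real k)"
    unfolding W_def ff_slope_eq[OF y(1,2)] hh_def y_def[symmetric] using y(3) by simp
  have kW: "21 \<le> real k * W"
    unfolding W_def using k y step ff_range[OF y'(1,2)] by (intro ff_slope_ge_21) auto
  have "real k * W - 1 = real k - (real i - 1) + (real k * hh ((real i - 1) / real k) - 1)"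
    unfolding W using k0 by (simp add: field_simps)
  also have "\<dots> \<le> real (k - i + 1 + J)" using J i by (simp add: of_nat_diff)
  finally have "real k * W - 1 \<le> real (k - i + 1 + J)" .
  then have "1 / real (k - i + 1 + J) \<le> 1 / (real k * W - 1)"
    using kW by (intro divide_left_mono) auto
  also have "\<dots> \<le> 21 / 20 * (1 / (real k * W))"
    using kW by (simp add: divide_simps mult.commute)
  also have "1 / (real k * W) \<le> ln (1 - y') - ln (1 - y)"
  proof -
    have "0 < real k * W" using kW by simp
    then have "0 < W" using k0 by (simp add: zero_less_mult_iff)
    have "1 / (real k * W) = (1 / real k) / W" by simp
    also have "\<dots> \<le> W * (ln (1 - y') - ln (1 - y)) / W"
      unfolding step W_def using ff_diff_le_ln_diff[of y' y] \<open>y' \<le> y\<close> y(2) y'(1) \<open>0 < W\<close>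
      by (intro divide_right_mono) (auto simp: W_def)
    finally show ?thesis using \<open>0 < W\<close> by simp
  qed
  finally show ?thesis unfolding y_def y'_def by simp
qed

lemma sum_inverse_le:
  fixes J :: "nat \<Rightarrow> nat"
  assumes k: "1323 \<le> k"
    and J: "\<And>i. 1 \<le> i \<Longrightarrow> i \<le> k \<Longrightarrow> real k * hh ((real i - 1) / real k) - 1 \<le> real (J i)"
  shows "(\<Sum>i = 1..k. 1 / real (k - i + 1 + J i)) \<le> 0.97"
proof -
  define g where "g i = ln (1 - ff_inv ((real i - 1) / real k))" for i
  have "(\<Sum>i = 1..k. 1 / real (k - i + 1 + J i)) \<le> (\<Sum>i = 1..k. 21 / 20 * (g (Suc i) - g i))"
    using inverse_le_ln_increment[OF k _ _ J] by (intro sum_mono) (simp add: g_def)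
  also have "\<dots> = 21 / 20 * (g (Suc k) - g 1)"
    by (simp only: sum_distrib_left[symmetric] sum_Suc_diff[of 1 k g])
  also have "g (Suc k) - g 1 = - ln (1 - cc)"
    using ff_inv_ff[of 0] ff_inv_ff[of cc] ff_0 ff_cc cc_bounds k by (simp add: g_def)
  also have "21 / 20 * (- ln (1 - cc)) \<le> 21 / 20 * 0.92"
    using minus_ln_one_minus_cc_le by simp
  finally show ?thesis by simp
qed

lemma wf_threshold:
  fixes x :: "'a \<Rightarrow> real"
  assumes fin: "finite N" and a: "0 < a" and deficit: "a < (\<Sum>w\<in>N. 1 - x w)"
    and x: "\<And>w. w \<in> N \<Longrightarrow> 0 \<le> x w \<and> x w \<le> 1"
  defines "L \<equiv> THE L. (\<Sum>w\<in>N. max 0 (L - x w)) = a"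
  shows "(\<Sum>w\<in>N. max 0 (L - x w)) = a" and "L \<le> 1"
proof -
  define \<phi> where "\<phi> L = (\<Sum>w\<in>N. max 0 (L - x w))" for L
  have "\<phi> 0 = 0" unfolding \<phi>_def using x by (intro sum.neutral) auto
  moreover have "\<phi> 1 = (\<Sum>w\<in>N. 1 - x w)" unfolding \<phi>_def using x by (intro sum.cong) auto
  moreover have "continuous_on {0..1} \<phi>" unfolding \<phi>_def[abs_def] by (intro continuous_intros)
  ultimately obtain L0 where L0: "0 \<le> L0" "L0 \<le> 1" "\<phi> L0 = a"
    using IVT'[of \<phi> 0 a 1] a deficit by auto
  have strict: "\<phi> L1 < \<phi> L2" if "L1 < L2" and L1: "\<phi> L1 = a" for L1 L2
  proof -
    have "\<exists>w\<in>N. 0 < L1 - x w"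
    proof (rule ccontr)
      assume "\<not> (\<exists>w\<in>N. 0 < L1 - x w)"
      then have "\<phi> L1 = 0" unfolding \<phi>_def by (intro sum.neutral) auto
      then show False using L1 a by simp
    qed
    then obtain w where w: "w \<in> N" "0 < L1 - x w" by blast
    show ?thesis unfolding \<phi>_def
    proof (rule sum_strict_mono_ex1[OF fin])
      show "\<forall>w\<in>N. max 0 (L1 - x w) \<le> max 0 (L2 - x w)" using \<open>L1 < L2\<close> by auto
      show "\<exists>w\<in>N. max 0 (L1 - x w) < max 0 (L2 - x w)" using \<open>L1 < L2\<close> w by (intro bexI) auto
    qed
  qed
  have "L' = L0" if "\<phi> L' = a" for L'
    using strict[of L0 L'] strict[of L' L0] L0 that by (cases L' L0 rule: linorder_cases) auto
  then have "L = L0" unfolding L_def \<phi>_def[symmetric] using L0(3) by blast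
  then show "(\<Sum>w\<in>N. max 0 (L - x w)) = a" "L \<le> 1" using L0 unfolding \<phi>_def by auto
qed

context
  fixes x :: "'a \<Rightarrow> real" and N :: "'a set" and a :: real
  assumes fin: "finite N" and a: "0 \<le> a" and bounded: "\<And>w. w \<in> N \<Longrightarrow> 0 \<le> x w \<and> x w \<le> 1"
begin

lemma wf_incr_bounds:
  assumes "v \<in> N"
  shows "0 \<le> wf_incr x N a v" and "x v + wf_incr x N a v \<le> 1"
proof -
  have "0 \<le> wf_incr x N a v \<and> x v + wf_incr x N a v \<le> 1"
  proof (cases "a = 0 \<or> (\<Sum>w\<in>N. 1 - x w) \<le> a")
    case True
    then show ?thesis using a bounded[OF assms] by (auto simp: wf_incr_def)
  next
    case False
    then have "0 < a" "a < (\<Sum>w\<in>N. 1 - x w)" using a by auto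
    from wf_threshold[of N a x, OF fin this bounded] False bounded[OF assms]
    show ?thesis by (auto simp: wf_incr_def)
  qed
  then show "0 \<le> wf_incr x N a v" "x v + wf_incr x N a v \<le> 1" by auto
qed

lemma wf_incr_le_average:
  assumes v: "v \<in> N" and M: "\<And>w. w \<in> N \<Longrightarrow> x w \<le> M" and below: "M + a / card N < 1"
  shows "x v + wf_incr x N a v \<le> M + a / card N"
proof (cases "a = 0")
  case True
  then show ?thesis using M[OF v] by (simp add: wf_incr_def)
next
  case False
  have N: "real (card N) > 0" using fin v card_gt_0_iff by auto
  have "real (card N) * (1 - M) \<le> (\<Sum>w\<in>N. 1 - x w)"
    using sum_mono[of N "\<lambda>_. 1 - M" "\<lambda>w. 1 - x w"] M by simp
  moreover have "a < real (card N) * (1 - M)" using below N by (simp add: field_simps)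
  ultimately have deficit: "a < (\<Sum>w\<in>N. 1 - x w)" by simp
  define L where "L = (THE L. (\<Sum>w\<in>N. max 0 (L - x w)) = a)"
  have "L \<le> M + a / card N"
  proof (rule ccontr)
    assume "\<not> ?thesis"
    then have "a < real (card N) * (L - M)" using N by (simp add: field_simps)
    also have "\<dots> \<le> (\<Sum>w\<in>N. max 0 (L - x w))"
      using sum_mono[of N "\<lambda>_. L - M" "\<lambda>w. max 0 (L - x w)"] M by fastforce
    also have "\<dots> = a" using wf_threshold[of N a x, OF fin _ deficit bounded] a False L_def by simp
    finally show False by simp
  qed
  moreover have "x v \<le> M + a / card N"
    using M[OF v] divide_nonneg_nonneg[OF a, of "real (card N)"] by linarith
  ultimately show ?thesis using a False deficit by (simp add: wf_incr_def L_def[symmetric])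
qed

end

lemma wf_step_notin: "w \<notin> N \<Longrightarrow> w \<noteq> u \<Longrightarrow> wf_step x u N w = x w"
  unfolding wf_step_def by (simp add: Let_def)

lemma wf_step_in: "w \<in> N \<Longrightarrow> wf_step x u N w = x w + wf_incr x N (1 - x u) w"
  unfolding wf_step_def by (simp add: Let_def)

lemma wf_step_empty: "wf_step x u {} = x"
  unfolding wf_step_def by (auto simp: Let_def)

lemma wf_step_self_ge:
  assumes "finite N" "u \<notin> N" "x u \<le> 1" "\<And>w. w \<in> N \<Longrightarrow> 0 \<le> x w \<and> x w \<le> 1"
  shows "x u \<le> wf_step x u N u"
proof -
  have "0 \<le> (\<Sum>v\<in>N. wf_incr x N (1 - x u) v)"
    using wf_incr_bounds(1)[OF assms(1) _ assms(4)] assms(3) by (intro sum_nonneg) auto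
  then show ?thesis using assms(2) unfolding wf_step_def by (simp add: Let_def)
qed

fun wf_levels :: "('a \<Rightarrow> 'a \<Rightarrow> bool) \<Rightarrow> 'a list \<Rightarrow> ('a \<Rightarrow> real) \<Rightarrow> nat \<Rightarrow> 'a \<Rightarrow> real" where
  "wf_levels adj L x 0 = x"
| "wf_levels adj L x (Suc n) =
     wf_step (wf_levels adj L x n) (L ! n) {v \<in> set (drop (Suc n) L). adj (L ! n) v}"

lemma wf_levels_Cons:
  "wf_levels adj (u # L) x (Suc n) = wf_levels adj L (wf_step x u {v \<in> set L. adj u v}) n"
  by (induction n) auto

lemma wf_pass_eq_wf_levels:
  "distinct L \<Longrightarrow> p < length L \<Longrightarrow> wf_pass adj L x (L ! p) = wf_levels adj L x p (L ! p)"
proof (induction L arbitrary: x p)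
  case Nil
  then show ?case by simp
next
  case (Cons u L)
  show ?case
  proof (cases p)
    case 0
    then show ?thesis by simp
  next
    case (Suc q)
    then have "L ! q \<noteq> u" using Cons.prems by (auto simp: nth_mem)
    then show ?thesis using Cons Suc by (simp add: wf_levels_Cons del: wf_levels.simps(2))
  qed
qed

definition hard_uvtx :: "nat \<Rightarrow> nat \<Rightarrow> hvtx" where
  "hard_uvtx k p = U (p div k + 1) (p mod k + 1)"

lemma hard_uorder_eq_map: "hard_uorder k m = map (hard_uvtx k) [0..<m * k]"
  unfolding hard_uvtx_def
proof (induction m)
  case 0
  then show ?case by (simp add: hard_uorder_def)
next
  case (Suc m)
  have "[0..<Suc m * k] = [0..<m * k] @ [m * k..<m * k + k]"
    using upt_add_eq_append[of 0 "m * k" k] by (simp add: add.commute)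
  moreover have "map (\<lambda>p. U (p div k + 1) (p mod k + 1)) [m * k..<m * k + k]
      = map (\<lambda>i. U (Suc m) i) [1..<k + 1]"
    by (rule nth_equalityI) (auto simp del: upt_Suc)
  ultimately show ?case using Suc by (simp add: hard_uorder_def)
qed

lemma length_hard_uorder: "length (hard_uorder k m) = m * k"
  by (simp add: hard_uorder_eq_map)

lemma nth_hard_order: "n < m * k \<Longrightarrow> (hard_uorder k m @ vs) ! n = hard_uvtx k n"
  by (simp add: hard_uorder_eq_map nth_append)

lemma hard_uvtx_eq_iff: "hard_uvtx k p = U t i \<longleftrightarrow> t = p div k + 1 \<and> i = p mod k + 1"
  by (auto simp: hard_uvtx_def)

lemma hard_uvtx_index:
  assumes "1 \<le> t" "1 \<le> i" "i \<le> k"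
  shows "hard_uvtx k ((t - 1) * k + (i - 1)) = U t i"
proof -
  have "i - 1 < k" using assms by simp
  then have "((t - 1) * k + (i - 1)) div k = t - 1" "((t - 1) * k + (i - 1)) mod k = i - 1"
    by simp_all
  then show ?thesis unfolding hard_uvtx_def using assms by simp
qed

lemma distinct_hard_uorder:
  assumes "0 < k"
  shows "distinct (hard_uorder k m)"
proof -
  have "inj (hard_uvtx k)"
    by (rule injI) (metis assms div_mult_mod_eq hard_uvtx_eq_iff add_right_cancel)
  then show ?thesis by (simp add: hard_uorder_eq_map distinct_map inj_on_subset[OF _ subset_UNIV])
qed

lemma set_drop_hard_order:
  "n \<le> m * k \<Longrightarrow> set (drop n (hard_uorder k m @ vs)) = hard_uvtx k ` {n..<m * k} \<union> set vs"
  by (simp add: hard_uorder_eq_map drop_map)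

lemma hard_vset_V: "w \<in> hard_vset k m \<Longrightarrow> \<exists>t j. w = V t j"
  unfolding hard_vset_def by auto

lemma hard_adj_U_cases:
  assumes "hard_adj k m (U t i) w"
  obtains j where "w = V t j" | j where "w = U (t + 1) j" "t + 1 \<le> m" | j where "w = U (t - 1) j" "2 \<le> t"
  using assms unfolding hard_adj_def by (cases w) auto

lemma hard_active_nbrs:
  assumes n: "n < m * k" and vs: "set vs = hard_vset k m" and u: "hard_uvtx k n = U t i"
    and w: "w \<in> set (drop (Suc n) (hard_uorder k m @ vs))" "hard_adj k m (U t i) w"
  shows "(\<exists>j. w = V t j) \<or> (\<exists>j. w = U (t + 1) j \<and> t + 1 \<le> m)"
  using w(2)
proof (cases rule: hard_adj_U_cases)
  case (3 j)
  have "w \<in> hard_uvtx k ` {Suc n..<m * k} \<union> set vs"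
    using w(1) by (subst (asm) set_drop_hard_order) (use n in auto)
  moreover have "w \<notin> set vs" using vs 3 hard_vset_V by fastforce
  ultimately obtain p where "n < p" "w = hard_uvtx k p" by (auto simp: Suc_le_eq)
  then have "t - 1 = p div k + 1" using 3 by (metis hard_uvtx_eq_iff)
  moreover have "t = n div k + 1" using u by (simp add: hard_uvtx_eq_iff)
  moreover have "n div k \<le> p div k" using \<open>n < p\<close> by (simp add: div_le_mono)
  ultimately show ?thesis by simp
qed auto

text \<open>The number of neighbours of \<open>u\<^sub>t\<^sub>,\<^sub>i\<close> in \<open>U\<^sub>t\<^sub>+\<^sub>1\<close>.\<close>

definition hard_J :: "nat \<Rightarrow> nat \<Rightarrow> nat" where
  "hard_J k i = nat \<lfloor>real k * hh ((real i - 1) / real k)\<rfloor>"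

lemma hard_J_bounds:
  assumes "1 \<le> i" "i \<le> k"
  shows "hard_J k i \<le> k" and "real k * hh ((real i - 1) / real k) - 1 \<le> real (hard_J k i)"
    and "0 \<le> \<lfloor>real k * hh ((real i - 1) / real k)\<rfloor>"
proof -
  have "0 \<le> hh ((real i - 1) / real k)" "hh ((real i - 1) / real k) \<le> 1"
    using hh_range assms by (auto simp: divide_le_eq)
  then have "0 \<le> real k * hh ((real i - 1) / real k)" "real k * hh ((real i - 1) / real k) \<le> real k"
    by (auto simp: mult_left_le)
  then show "hard_J k i \<le> k" "real k * hh ((real i - 1) / real k) - 1 \<le> real (hard_J k i)"
    "0 \<le> \<lfloor>real k * hh ((real i - 1) / real k)\<rfloor>"
    unfolding hard_J_def by linarith+
qed

lemma hard_active_card: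
  assumes n: "n < m * k" and vs: "set vs = hard_vset k m" and u: "hard_uvtx k n = U t i"
    and t: "t < m"
  shows "k - i + 1 + hard_J k i \<le> card {w \<in> set (drop (Suc n) (hard_uorder k m @ vs)). hard_adj k m (U t i) w}"
    (is "_ \<le> card ?N")
proof -
  have ti: "t = n div k + 1" "i = n mod k + 1" using u by (auto simp: hard_uvtx_eq_iff)
  have k: "0 < k" using n by (cases k) auto
  then have i: "1 \<le> i" "i \<le> k" using ti by (auto simp: Suc_le_eq)
  have later: "set (drop (Suc n) (hard_uorder k m @ vs)) = hard_uvtx k ` {Suc n..<m * k} \<union> set vs"
    using n by (intro set_drop_hard_order) simp
  have "V t ` {i..k} \<subseteq> ?N"
    using i ti t unfolding later vs by (auto simp: hard_vset_def hard_adj_def)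
  moreover have "U (t + 1) ` {1..hard_J k i} \<subseteq> ?N"
  proof
    fix w assume "w \<in> U (t + 1) ` {1..hard_J k i}"
    then obtain j where j: "w = U (t + 1) j" "1 \<le> j" "j \<le> hard_J k i" by auto
    then have "j \<le> k" using hard_J_bounds(1)[OF i] by simp
    define p where "p = t * k + (j - 1)"
    have "w = hard_uvtx k p" using hard_uvtx_index[of "t + 1" j k] j \<open>j \<le> k\<close> by (simp add: p_def)
    moreover have "n < p"
    proof -
      have "n = n div k * k + n mod k" by simp
      moreover have "t * k = n div k * k + k" using ti by simp
      moreover have "n mod k < k" using k by simp
      ultimately show ?thesis unfolding p_def by linarith
    qed
    moreover have "p < m * k"
    proof -
      have "p < (t + 1) * k" using \<open>j \<le> k\<close> j(2) by (simp add: p_def)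
      also have "\<dots> \<le> m * k" using t by (intro mult_right_mono) auto
      finally show ?thesis .
    qed
    moreover have "hard_adj k m (U t i) w"
      using j i ti t hard_J_bounds(3)[OF i] unfolding hard_adj_def hard_J_def by auto
    ultimately show "w \<in> ?N" unfolding later by auto
  qed
  ultimately have "V t ` {i..k} \<union> U (t + 1) ` {1..hard_J k i} \<subseteq> ?N" by blast
  then have "card (V t ` {i..k} \<union> U (t + 1) ` {1..hard_J k i}) \<le> card ?N"
    by (intro card_mono) auto
  moreover have "card (V t ` {i..k} \<union> U (t + 1) ` {1..hard_J k i}) = k - i + 1 + hard_J k i"
    using i by (subst card_Un_disjoint) (auto simp: card_image inj_on_def)
  ultimately show ?thesis by simp
qed

definition hard_S :: "nat \<Rightarrow> nat \<Rightarrow> real" where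
  "hard_S k i = (\<Sum>i' = 1..<i. 1 / real (k - i' + 1 + hard_J k i'))"

lemma hard_S_Suc: "1 \<le> i \<Longrightarrow> hard_S k (Suc i) = hard_S k i + 1 / real (k - i + 1 + hard_J k i)"
  unfolding hard_S_def by simp

lemma hard_S_mono: "i \<le> i' \<Longrightarrow> hard_S k i \<le> hard_S k i'"
  unfolding hard_S_def by (intro sum_mono2) auto

lemma hard_S_nonneg: "0 \<le> hard_S k i"
  unfolding hard_S_def by (intro sum_nonneg) auto

lemma hard_S_le: "1323 \<le> k \<Longrightarrow> hard_S k (k + 1) \<le> 0.97"
  unfolding hard_S_def using sum_inverse_le[of k "hard_J k"] hard_J_bounds(2)
  by (simp add: atLeastLessThanSuc_atLeastAtMost)

lemma wf_step_le_spread: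
  assumes fin: "finite N" and uN: "u \<notin> N" and xu: "0 \<le> x u" "x u \<le> 1"
    and x: "\<And>w. w \<in> N \<Longrightarrow> 0 \<le> x w \<and> x w \<le> M"
    and c: "1 \<le> c" "c \<le> real (card N)" and below: "M + 1 / c < 1" and w: "w \<in> N"
  shows "wf_step x u N w \<le> M + 1 / c"
proof -
  have share: "(1 - x u) / card N \<le> 1 / c"
    using xu c by (intro frac_le) auto
  have "M < 1" using below c by (smt (verit) divide_nonneg_nonneg)
  have "x w + wf_incr x N (1 - x u) w \<le> M + (1 - x u) / card N"
  proof (rule wf_incr_le_average[OF fin _ _ w])
    show "0 \<le> 1 - x u" using xu by simp
    show "0 \<le> x v \<and> x v \<le> 1" if "v \<in> N" for v using x[OF that] \<open>M < 1\<close> by simp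
    show "x v \<le> M" if "v \<in> N" for v using x[OF that] by simp
    show "M + (1 - x u) / card N < 1" using share below by simp
  qed
  then show ?thesis using share w by (simp add: wf_step_in)
qed

text \<open>Levels just before the deadline of \<open>u\<^sub>t\<^sub>,\<^sub>i\<close>: all of \<open>V\<^sub>t\<close> and \<open>U\<^sub>t\<^sub>+\<^sub>1\<close> is below \<open>S i\<close>,
  the remaining vertices of \<open>U\<^sub>t\<close> and the finished layers of \<open>V\<close> are below \<open>S (k + 1)\<close>, later
  layers are still empty, and \<open>V\<^sub>t\<close> is below \<open>1\<close> (which matters only for \<open>t = m\<close>).\<close>

definition hard_inv :: "nat \<Rightarrow> nat \<Rightarrow> (hvtx \<Rightarrow> real) \<Rightarrow> nat \<Rightarrow> nat \<Rightarrow> bool" where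
  "hard_inv k m x t i \<longleftrightarrow> (\<forall>w. 0 \<le> x w)
   \<and> (\<forall>t' j. t < t' \<longrightarrow> x (V t' j) = 0)
   \<and> (\<forall>t' j. t + 1 < t' \<or> m < t' \<longrightarrow> x (U t' j) = 0)
   \<and> (\<forall>t' j. t' < t \<and> t' < m \<longrightarrow> x (V t' j) \<le> hard_S k (k + 1))
   \<and> (t < m \<longrightarrow> (\<forall>j. x (V t j) \<le> hard_S k i \<and> x (U (t + 1) j) \<le> hard_S k i))
   \<and> (\<forall>j. i \<le> j \<longrightarrow> x (U t j) \<le> hard_S k (k + 1))
   \<and> (\<forall>j. x (V t j) \<le> 1)"

lemma hard_invD:
  assumes "hard_inv k m x t i"
  shows "0 \<le> x w"
    and "t < t' \<Longrightarrow> x (V t' j) = 0"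
    and "t + 1 < t' \<or> m < t' \<Longrightarrow> x (U t' j) = 0"
    and "t' < t \<Longrightarrow> t' < m \<Longrightarrow> x (V t' j) \<le> hard_S k (k + 1)"
    and "t < m \<Longrightarrow> x (V t j) \<le> hard_S k i"
    and "t < m \<Longrightarrow> x (U (t + 1) j) \<le> hard_S k i"
    and "i \<le> j \<Longrightarrow> x (U t j) \<le> hard_S k (k + 1)"
    and "x (V t j) \<le> 1"
  using assms unfolding hard_inv_def by blast+

lemma hard_inv_init: "hard_inv k m (\<lambda>_. 0) 1 1"
  unfolding hard_inv_def using hard_S_nonneg by auto

context
  fixes k m t i :: nat and x :: "hvtx \<Rightarrow> real" and N :: "hvtx set"
  assumes k: "1323 \<le> k" and t: "1 \<le> t" "t \<le> m" and i: "1 \<le> i" "i \<le> k"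
    and inv: "hard_inv k m x t i"
    and fin: "finite N" and uN: "U t i \<notin> N"
    and N: "\<And>w. w \<in> N \<Longrightarrow> (\<exists>j. w = V t j) \<or> (\<exists>j. w = U (t + 1) j \<and> t + 1 \<le> m)"
    and card: "t < m \<Longrightarrow> k - i + 1 + hard_J k i \<le> card N"
begin

lemma hard_S_lt_1: "i' \<le> k + 1 \<Longrightarrow> hard_S k i' < 1"
  using hard_S_mono[of i' "k + 1" k] hard_S_le[OF k] by simp

lemma hard_step_bounds:
  shows "0 \<le> x (U t i)" "x (U t i) \<le> 1"
    and "\<And>w. w \<in> N \<Longrightarrow> 0 \<le> x w \<and> x w \<le> 1"
    and "\<And>w. t < m \<Longrightarrow> w \<in> N \<Longrightarrow> x w \<le> hard_S k i"
proof -
  show "0 \<le> x (U t i)" "x (U t i) \<le> 1"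
    using hard_invD(1)[OF inv] hard_invD(7)[OF inv, of i] hard_S_lt_1[of "k + 1"] by auto
  show below_S: "x w \<le> hard_S k i" if "t < m" "w \<in> N" for w
    using N[OF that(2)] that(1) hard_invD(5,6)[OF inv] by auto
  show "0 \<le> x w \<and> x w \<le> 1" if "w \<in> N" for w
  proof -
    have "x w \<le> 1"
    proof (cases "t < m")
      case True
      then show ?thesis using below_S[OF True that] hard_S_lt_1[of i] i by simp
    next
      case False
      then show ?thesis using N[OF that] hard_invD(8)[OF inv] by auto
    qed
    then show ?thesis using hard_invD(1)[OF inv] by simp
  qed
qed

lemma hard_step_nonneg: "0 \<le> wf_step x (U t i) N w"
proof -
  consider "w \<in> N" | "w = U t i" | "w \<notin> N" "w \<noteq> U t i" by blast
  then show ?thesis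
  proof cases
    case 1
    then show ?thesis
      using hard_step_bounds wf_incr_bounds(1)[where x = x and N = N and a = "1 - x (U t i)", OF fin _ hard_step_bounds(3)] by (simp add: wf_step_in)
  next
    case 2
    then show ?thesis using wf_step_self_ge[OF fin uN] hard_step_bounds by fastforce
  next
    case 3
    then show ?thesis using hard_invD(1)[OF inv] by (simp add: wf_step_notin)
  qed
qed

lemma hard_step_V_le_1: "wf_step x (U t i) N (V t j) \<le> 1"
proof (cases "V t j \<in> N")
  case True
  then show ?thesis
    using hard_step_bounds wf_incr_bounds(2)[where x = x and N = N and a = "1 - x (U t i)", OF fin _ hard_step_bounds(3)] by (simp add: wf_step_in)
next
  case False
  then show ?thesis using hard_invD(8)[OF inv] by (simp add: wf_step_notin)
qed

lemma hard_step_le_S: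
  assumes "t < m" and w: "w \<in> N"
  shows "wf_step x (U t i) N w \<le> hard_S k (Suc i)"
proof -
  have "wf_step x (U t i) N w \<le> hard_S k i + 1 / real (k - i + 1 + hard_J k i)"
  proof (rule wf_step_le_spread[where M = "hard_S k i"])
    show "0 \<le> x v \<and> x v \<le> hard_S k i" if "v \<in> N" for v
      using hard_step_bounds(3,4) that \<open>t < m\<close> by blast
    show "real (k - i + 1 + hard_J k i) \<le> real (card N)" using card \<open>t < m\<close> by simp
    show "hard_S k i + 1 / real (k - i + 1 + hard_J k i) < 1"
      using hard_S_lt_1[of "Suc i"] i by (simp add: hard_S_Suc)
  qed (use fin uN hard_step_bounds(1,2) w in auto)
  then show ?thesis using i by (simp add: hard_S_Suc)
qed

lemma hard_step_V_other:
  assumes "t' \<noteq> t"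
  shows "wf_step x (U t i) N (V t' j) = x (V t' j)"
proof -
  have "V t' j \<notin> N" using N[of "V t' j"] assms by auto
  then show ?thesis by (simp add: wf_step_notin)
qed

lemma hard_step_U_other:
  assumes "t' \<noteq> t + 1 \<or> m < t'" "U t' j \<noteq> U t i"
  shows "wf_step x (U t i) N (U t' j) = x (U t' j)"
proof -
  have "U t' j \<notin> N" using N[of "U t' j"] assms(1) by auto
  then show ?thesis using assms(2) by (simp add: wf_step_notin)
qed

lemma hard_step_next_layer_le_S:
  assumes "t < m"
  shows "wf_step x (U t i) N (V t j) \<le> hard_S k (Suc i)" "wf_step x (U t i) N (U (t + 1) j) \<le> hard_S k (Suc i)"
proof -
  have "hard_S k i \<le> hard_S k (Suc i)" by (rule hard_S_mono) simp
  then have "x (V t j) \<le> hard_S k (Suc i)" "x (U (t + 1) j) \<le> hard_S k (Suc i)"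
    using hard_invD(5,6)[OF inv assms] by (meson order_trans)+
  then show "wf_step x (U t i) N (V t j) \<le> hard_S k (Suc i)"
    using hard_step_le_S[OF assms] by (cases "V t j \<in> N") (auto simp: wf_step_notin)
  from \<open>x (U (t + 1) j) \<le> hard_S k (Suc i)\<close>
  show "wf_step x (U t i) N (U (t + 1) j) \<le> hard_S k (Suc i)"
    using hard_step_le_S[OF assms] by (cases "U (t + 1) j \<in> N") (auto simp: wf_step_notin)
qed

lemma hard_inv_next_vertex:
  assumes "i < k"
  shows "hard_inv k m (wf_step x (U t i) N) t (Suc i)"
proof -
  let ?x' = "wf_step x (U t i) N"
  have "?x' (V t' j) = 0" if "t < t'" for t' j
    using hard_step_V_other hard_invD(2)[OF inv] that by simp
  moreover have "?x' (U t' j) = 0" if "t + 1 < t' \<or> m < t'" for t' j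
    using hard_step_U_other[of t' j] hard_invD(3)[OF inv] that t by auto
  moreover have "?x' (V t' j) \<le> hard_S k (k + 1)" if "t' < t" "t' < m" for t' j
    using hard_step_V_other hard_invD(4)[OF inv] that by simp
  moreover have "?x' (U t j) \<le> hard_S k (k + 1)" if "Suc i \<le> j" for j
    using hard_step_U_other[of t j] hard_invD(7)[OF inv, of j] that by simp
  ultimately show ?thesis
    unfolding hard_inv_def using hard_step_nonneg hard_step_V_le_1 hard_step_next_layer_le_S by blast
qed

lemma hard_inv_next_layer:
  assumes "i = k"
  shows "hard_inv k m (wf_step x (U t i) N) (Suc t) 1"
proof -
  let ?x' = "wf_step x (U t i) N"
  have S: "hard_S k (Suc i) = hard_S k (k + 1)" using assms by simp
  have "?x' (V t' j) = 0" if "Suc t < t'" for t' j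
    using hard_step_V_other hard_invD(2)[OF inv] that by simp
  moreover have "?x' (U t' j) = 0" if "Suc t + 1 < t' \<or> m < t'" for t' j
    using hard_step_U_other[of t' j] hard_invD(3)[OF inv] that t by auto
  moreover have "?x' (V t' j) \<le> hard_S k (k + 1)" if "t' < Suc t" "t' < m" for t' j
  proof (cases "t' = t")
    case True
    then show ?thesis using hard_step_next_layer_le_S(1) that S by simp
  next
    case False
    then show ?thesis using hard_step_V_other hard_invD(4)[OF inv] that by simp
  qed
  moreover have "?x' (V (Suc t) j) \<le> hard_S k 1 \<and> ?x' (U (Suc t + 1) j) \<le> hard_S k 1" for j
    using hard_step_V_other[of "Suc t" j] hard_step_U_other[of "Suc t + 1" j]
      hard_invD(2,3)[OF inv] hard_S_nonneg[of k 1] by simp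
  moreover have "?x' (U (Suc t) j) \<le> hard_S k (k + 1)" for j
  proof (cases "t < m")
    case True
    then show ?thesis using hard_step_next_layer_le_S(2) S by simp
  next
    case False
    then show ?thesis
      using hard_step_U_other[of "Suc t" j] hard_invD(3)[OF inv, of "Suc t" j] hard_S_nonneg t by simp
  qed
  moreover have "?x' (V (Suc t) j) \<le> 1" for j
    using hard_step_V_other[of "Suc t" j] hard_invD(2)[OF inv] by simp
  ultimately show ?thesis
    unfolding hard_inv_def using hard_step_nonneg by blast
qed

end

lemma hard_inv_levels:
  assumes k: "1323 \<le> k" and vs: "set vs = hard_vset k m"
  shows "n \<le> m * k \<Longrightarrow>
    hard_inv k m (wf_levels (hard_adj k m) (hard_uorder k m @ vs) (\<lambda>_. 0) n) (n div k + 1) (n mod k + 1)"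
proof (induction n)
  case 0
  then show ?case using hard_inv_init by simp
next
  case (Suc n)
  define t where "t = n div k + 1"
  define i where "i = n mod k + 1"
  define L where "L = hard_uorder k m @ vs"
  define N where "N = {w \<in> set (drop (Suc n) L). hard_adj k m (U t i) w}"
  have n: "n < m * k" using Suc.prems by simp
  have u: "hard_uvtx k n = U t i" by (simp add: hard_uvtx_def t_def i_def)
  have t: "1 \<le> t" "t \<le> m" using n by (auto simp: t_def less_mult_imp_div_less Suc_le_eq)
  have i: "1 \<le> i" "i \<le> k" using k by (auto simp: i_def Suc_le_eq)
  have inv: "hard_inv k m (wf_levels (hard_adj k m) L (\<lambda>_. 0) n) t i"
    using Suc n by (simp add: t_def i_def L_def)
  have fin: "finite N" by (simp add: N_def)
  have uN: "U t i \<notin> N" by (simp add: N_def hard_adj_def)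
  have nbrs: "\<And>w. w \<in> N \<Longrightarrow> (\<exists>j. w = V t j) \<or> (\<exists>j. w = U (t + 1) j \<and> t + 1 \<le> m)"
    using hard_active_nbrs[OF n vs u] by (auto simp: N_def L_def)
  have card: "t < m \<Longrightarrow> k - i + 1 + hard_J k i \<le> card N"
    using hard_active_card[OF n vs u] by (simp add: N_def L_def)
  have "wf_levels (hard_adj k m) L (\<lambda>_. 0) (Suc n) = wf_step (wf_levels (hard_adj k m) L (\<lambda>_. 0) n) (U t i) N"
    using nth_hard_order[OF n] u by (simp add: N_def L_def)
  note step = hard_inv_next_vertex[OF k t i inv fin uN nbrs card, folded this]
    hard_inv_next_layer[OF k t i inv fin uN nbrs card, folded this]
  show ?case
  proof (cases "i < k")
    case True
    then have "Suc n div k + 1 = t" "Suc n mod k + 1 = Suc i"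
      by (simp_all add: t_def i_def div_Suc mod_Suc)
    then show ?thesis using step True by (simp add: L_def)
  next
    case False
    then have "i = k" "Suc n div k + 1 = Suc t" "Suc n mod k + 1 = 1"
      using i by (simp_all add: t_def i_def div_Suc mod_Suc)
    then show ?thesis using step by (simp add: L_def)
  qed
qed

lemma hard_levels_v_phase:
  assumes vs: "set vs = hard_vset k m"
  shows "m * k + d \<le> length (hard_uorder k m @ vs) \<Longrightarrow>
    wf_levels (hard_adj k m) (hard_uorder k m @ vs) x (m * k + d)
    = wf_levels (hard_adj k m) (hard_uorder k m @ vs) x (m * k)"
proof (induction d)
  case 0
  then show ?case by simp
next
  case (Suc d)
  define L where "L = hard_uorder k m @ vs"
  have d: "d < length vs" using Suc.prems by (simp add: length_hard_uorder)
  then have "vs ! d \<in> hard_vset k m" using vs nth_mem by blast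
  then obtain t j where "vs ! d = V t j" using hard_vset_V by blast
  then have v: "L ! (m * k + d) = V t j" by (simp add: L_def nth_append length_hard_uorder)
  have "set (drop (Suc (m * k + d)) L) \<subseteq> set vs"
    by (simp add: L_def length_hard_uorder set_drop_subset)
  then have "{w \<in> set (drop (Suc (m * k + d)) L). hard_adj k m (L ! (m * k + d)) w} = {}"
    using v vs hard_vset_V by (fastforce simp: hard_adj_def)
  then have "wf_levels (hard_adj k m) L x (Suc (m * k + d)) = wf_levels (hard_adj k m) L x (m * k + d)"
    by (simp only: wf_levels.simps wf_step_empty)
  then show ?case using Suc by (simp add: L_def)
qed

lemma distinct_hard_order:
  assumes "0 < k" "distinct vs" "set vs = hard_vset k m"
  shows "distinct (hard_uorder k m @ vs)"
proof -
  have "set (hard_uorder k m) \<inter> set vs = {}"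
    using assms(3) hard_vset_V by (fastforce simp: hard_uorder_eq_map hard_uvtx_def)
  then show ?thesis using assms distinct_hard_uorder by simp
qed

context
  fixes k m :: nat and vs :: "hvtx list"
  assumes k: "1323 \<le> k" and vs: "distinct vs" "set vs = hard_vset k m"
begin

lemma hard_pass_eq_levels:
  "p < length (hard_uorder k m @ vs) \<Longrightarrow> hard_pass k m vs ((hard_uorder k m @ vs) ! p)
     = wf_levels (hard_adj k m) (hard_uorder k m @ vs) (\<lambda>_. 0) p ((hard_uorder k m @ vs) ! p)"
  unfolding hard_pass_def using distinct_hard_order vs k by (intro wf_pass_eq_wf_levels) auto

lemma hard_pass_U_le:
  assumes t: "1 \<le> t" "t \<le> m" and i: "1 \<le> i" "i \<le> k"
  shows "hard_pass k m vs (U t i) \<le> hard_S k (k + 1)"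
proof -
  define p where "p = (t - 1) * k + (i - 1)"
  have u: "hard_uvtx k p = U t i" using hard_uvtx_index t i by (simp add: p_def)
  have "p < t * k" using t i by (cases t) (auto simp: p_def)
  also have "\<dots> \<le> m * k" using t by simp
  finally have p: "p < m * k" .
  have "hard_inv k m (wf_levels (hard_adj k m) (hard_uorder k m @ vs) (\<lambda>_. 0) p) t i"
    using hard_inv_levels[OF k vs(2), of p] p u by (auto simp: hard_uvtx_eq_iff)
  then show ?thesis
    using hard_invD(7) hard_pass_eq_levels[of p] p u nth_hard_order[OF p] by (simp add: length_hard_uorder)
qed

lemma hard_pass_V_le:
  assumes t: "1 \<le> t" "t < m" and i: "1 \<le> i" "i \<le> k"
  shows "hard_pass k m vs (V t i) \<le> hard_S k (k + 1)"
proof -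
  have "V t i \<in> set vs" using vs(2) t i by (auto simp: hard_vset_def)
  then obtain q where q: "q < length vs" "vs ! q = V t i" by (auto simp: in_set_conv_nth)
  define L where "L = hard_uorder k m @ vs"
  have p: "m * k + q < length L" "L ! (m * k + q) = V t i"
    using q by (simp_all add: L_def nth_append length_hard_uorder)
  have "hard_inv k m (wf_levels (hard_adj k m) L (\<lambda>_. 0) (m * k)) (m + 1) 1"
    using hard_inv_levels[OF k vs(2), of "m * k"] k by (simp add: L_def)
  moreover have "wf_levels (hard_adj k m) L (\<lambda>_. 0) (m * k + q) = wf_levels (hard_adj k m) L (\<lambda>_. 0) (m * k)"
    using hard_levels_v_phase[OF vs(2)] p by (simp add: L_def)
  ultimately show ?thesis
    using hard_invD(4) hard_pass_eq_levels[of "m * k + q"] p t by (simp add: L_def)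
qed

end

theorem lemma3p3:
  shows "\<exists>k0::nat. \<forall>k\<ge>k0. \<forall>m::nat. \<forall>vs.
           distinct vs \<and> set vs = hard_vset k m \<longrightarrow>
           (\<forall>t\<in>{1..m}. \<forall>i\<in>{1..k}. hard_pass k m vs (U t i) < 1) \<and>
           (\<forall>t\<in>{1..m-1}. \<forall>i\<in>{1..k}. hard_pass k m vs (V t i) < 1)"
proof (intro exI[of _ 1323] allI impI)
  fix k m :: nat and vs
  assume "1323 \<le> k" "distinct vs \<and> set vs = hard_vset k m"
  moreover have "hard_S k (k + 1) < 1" using hard_S_le[OF \<open>1323 \<le> k\<close>] by simp
  ultimately show "(\<forall>t\<in>{1..m}. \<forall>i\<in>{1..k}. hard_pass k m vs (U t i) < 1) \<and>
      (\<forall>t\<in>{1..m-1}. \<forall>i\<in>{1..k}. hard_pass k m vs (V t i) < 1)"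
    using hard_pass_U_le hard_pass_V_le by fastforce
qed

end
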